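(* Let $N$ be a finite set of services, all controlled by a single (monopolistic) seller, let $v:2^N\to\mathbb{R}_+$ be a monotone submodular valuation with $v(\emptyset)=0$, and let $X$ be a maximal decision map for $v$. Then $$\max_{p\in\mathbb{R}^N_+}u_1(p)=\max_{S\subseteq N}\sum_{i\in S}v(\{i\}\mid S\setminus\{i\}),$$ where $u_1(p)=\sum_{j\in N}p_j\cdot\mathbf{1}\{j\in X(p)\}$.
   Context: Marginal value $v(T\mid S)=v(S\cup T)-v(S)$; submodular means $v(S\cup T)+v(S\cap T)\le v(S)+v(T)$. For $p\in\mathbb{R}^N_+$, $p(S)=\sum_{j\in S}p_j$, $D(v;p)=\arg\max_{S\subseteq N}(v(S)-p(S))$. A decision map is $X:\mathbb{R}^N_+\to2^N$ with $X(p)\in D(v;p)$ for all $p$; it is maximal if for every $p$ there is no $S'\in D(v;p)$ with $X(p)\subsetneq S'$. The monopolistic seller chooses a price $p_j$ for each service and earns $u_1(p)$. *)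

theory Defs
  imports "HOL-Analysis.Analysis"
begin

definition marginal :: "('a set \<Rightarrow> real) \<Rightarrow> 'a set \<Rightarrow> 'a set \<Rightarrow> real" where
  "marginal v T S = v (S \<union> T) - v S"

definition monotone_val :: "'a set \<Rightarrow> ('a set \<Rightarrow> real) \<Rightarrow> bool" where
  "monotone_val N v \<longleftrightarrow> (\<forall>S T. S \<subseteq> T \<and> T \<subseteq> N \<longrightarrow> v S \<le> v T)"

definition submodular :: "'a set \<Rightarrow> ('a set \<Rightarrow> real) \<Rightarrow> bool" where
  "submodular N v \<longleftrightarrow>
     (\<forall>S T. S \<subseteq> N \<and> T \<subseteq> N \<longrightarrow> v (S \<union> T) + v (S \<inter> T) \<le> v S + v T)"

definition valuation :: "'a set \<Rightarrow> ('a set \<Rightarrow> real) \<Rightarrow> bool" where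
  "valuation N v \<longleftrightarrow> v {} = 0 \<and> (\<forall>S\<subseteq>N. v S \<ge> 0)"

definition price_vec :: "'a set \<Rightarrow> ('a \<Rightarrow> real) \<Rightarrow> bool" where
  "price_vec N p \<longleftrightarrow> (\<forall>j\<in>N. p j \<ge> 0)"

definition demand :: "'a set \<Rightarrow> ('a set \<Rightarrow> real) \<Rightarrow> ('a \<Rightarrow> real) \<Rightarrow> 'a set set" where
  "demand N v p = {S. S \<subseteq> N \<and> (\<forall>T. T \<subseteq> N \<longrightarrow> v T - sum p T \<le> v S - sum p S)}"

definition decision_map ::
  "'a set \<Rightarrow> ('a set \<Rightarrow> real) \<Rightarrow> (('a \<Rightarrow> real) \<Rightarrow> 'a set) \<Rightarrow> bool" where
  "decision_map N v X \<longleftrightarrow> (\<forall>p. price_vec N p \<longrightarrow> X p \<in> demand N v p)"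

definition maximal_decision_map ::
  "'a set \<Rightarrow> ('a set \<Rightarrow> real) \<Rightarrow> (('a \<Rightarrow> real) \<Rightarrow> 'a set) \<Rightarrow> bool" where
  "maximal_decision_map N v X \<longleftrightarrow> decision_map N v X \<and>
     (\<forall>p. price_vec N p \<longrightarrow> \<not> (\<exists>S'\<in>demand N v p. X p \<subset> S'))"

definition revenue :: "'a set \<Rightarrow> (('a \<Rightarrow> real) \<Rightarrow> 'a set) \<Rightarrow> ('a \<Rightarrow> real) \<Rightarrow> real" where
  "revenue N X p = (\<Sum>j\<in>N. p j * (if j \<in> X p then 1 else 0))"

end

theory Submission
  imports Defs
begin

text \<open>If S is demanded at prices p, then p i \<le> v(S) - v(S - {i}) for every i \<in> S,
  since otherwise dropping i would increase the surplus; summing, the revenue is bounded by the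
  sum of these marginals for some S \<subseteq> N. Conversely, take S maximising that sum and price each
  service of S at its marginal and every other service prohibitively. Submodularity makes the
  marginals of S - T sum to at most v(S) - v(T) for T \<subseteq> S, so S is demanded and every
  demanded set lies inside S; maximality of X then forces X(p) = S, which attains the bound.\<close>

lemma revenue_eq_sum:
  assumes "finite N" "X p \<subseteq> N"
  shows "revenue N X p = sum p (X p)"
proof -
  have "revenue N X p = (\<Sum>j\<in>N. if j \<in> X p then p j else 0)"
    unfolding revenue_def by (rule sum.cong) auto
  also have "\<dots> = sum p (N \<inter> X p)" using assms(1) by (simp add: sum.inter_restrict)
  also have "N \<inter> X p = X p" using assms(2) by blast
  finally show ?thesis .
qed

lemma marginal_singleton:
  assumes "i \<in> S"
  shows "marginal v {i} (S - {i}) = v S - v (S - {i})"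
  using assms unfolding marginal_def by (simp add: insert_absorb)

lemma demand_subset:
  "S \<in> demand N v p \<Longrightarrow> S \<subseteq> N"
  unfolding demand_def by simp

lemma demand_price_le_marginal:
  assumes "finite N" "S \<in> demand N v p" "i \<in> S"
  shows "p i \<le> marginal v {i} (S - {i})"
proof -
  have SN: "S \<subseteq> N" using assms(2) by (rule demand_subset)
  then have "v (S - {i}) - sum p (S - {i}) \<le> v S - sum p S"
    using assms(2) unfolding demand_def by blast
  moreover have "sum p S = p i + sum p (S - {i})"
    using assms(1,3) SN by (simp add: sum.remove finite_subset)
  ultimately show ?thesis using marginal_singleton[OF assms(3)] by simp
qed

lemma demand_price_sum_le_marginals:
  assumes "finite N" "S \<in> demand N v p"
  shows "sum p S \<le> (\<Sum>i\<in>S. marginal v {i} (S - {i}))"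
  using demand_price_le_marginal[OF assms] by (rule sum_mono)

lemma revenue_le_Max_marginals:
  assumes "finite N" "decision_map N v X" "price_vec N p"
  shows "revenue N X p \<le> (MAX S\<in>Pow N. \<Sum>i\<in>S. marginal v {i} (S - {i}))"
proof -
  have XD: "X p \<in> demand N v p" using assms(2,3) unfolding decision_map_def by blast
  then have XN: "X p \<subseteq> N" by (rule demand_subset)
  have "revenue N X p = sum p (X p)" by (rule revenue_eq_sum[of N X p, OF assms(1) XN])
  also have "\<dots> \<le> (\<Sum>i\<in>X p. marginal v {i} (X p - {i}))"
    using demand_price_sum_le_marginals[OF assms(1) XD] .
  also have "\<dots> \<le> (MAX S\<in>Pow N. \<Sum>i\<in>S. marginal v {i} (S - {i}))"
    using assms(1) XN by (intro Max_ge) auto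
  finally show ?thesis .
qed

lemma submodular_removed_marginals_le:
  assumes "submodular N v" "finite A" "A \<inter> T = {}" "A \<union> T \<subseteq> U" "U \<subseteq> N"
  shows "(\<Sum>i\<in>A. v U - v (U - {i})) \<le> v (T \<union> A) - v T"
  using assms(2-4)
proof (induction A rule: finite_induct)
  case empty
  then show ?case by simp
next
  case (insert a A)
  have IH: "(\<Sum>i\<in>A. v U - v (U - {i})) \<le> v (T \<union> A) - v T"
    using insert by auto
  have "U - {a} \<subseteq> N" "T \<union> A \<union> {a} \<subseteq> N" using insert.prems assms(5) by auto
  then have "v ((U - {a}) \<union> (T \<union> A \<union> {a})) + v ((U - {a}) \<inter> (T \<union> A \<union> {a}))
      \<le> v (U - {a}) + v (T \<union> A \<union> {a})"
    using assms(1) unfolding submodular_def by blast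
  moreover have "(U - {a}) \<union> (T \<union> A \<union> {a}) = U"
    and "(U - {a}) \<inter> (T \<union> A \<union> {a}) = T \<union> A"
    and "T \<union> insert a A = T \<union> A \<union> {a}"
    using insert by auto
  ultimately show ?case using IH insert(1,2) by simp
qed

lemma submodular_marginals_le:
  assumes "submodular N v" "finite S" "S \<subseteq> N" "T \<subseteq> S"
  shows "(\<Sum>i\<in>S - T. v S - v (S - {i})) \<le> v S - v T"
proof -
  have "T \<union> (S - T) = S" using assms(4) by auto
  then show ?thesis
    using submodular_removed_marginals_le[OF assms(1), of "S - T" T S] assms by auto
qed

text \<open>Services outside S are priced above v(N), hence above any attainable value.\<close>

definition marginal_prices :: "'a set \<Rightarrow> ('a set \<Rightarrow> real) \<Rightarrow> 'a set \<Rightarrow> 'a \<Rightarrow> real" where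
  "marginal_prices N v S j = (if j \<in> S then v S - v (S - {j}) else v N + 1)"

lemma marginal_prices_nonneg:
  assumes "valuation N v" "monotone_val N v" "S \<subseteq> N"
  shows "marginal_prices N v S j \<ge> 0"
proof -
  have "v (S - {j}) \<le> v S" "v N \<ge> 0"
    using assms unfolding monotone_val_def valuation_def by auto
  then show ?thesis unfolding marginal_prices_def by simp
qed

lemma price_vec_marginal_prices:
  assumes "valuation N v" "monotone_val N v" "S \<subseteq> N"
  shows "price_vec N (marginal_prices N v S)"
  unfolding price_vec_def using marginal_prices_nonneg[OF assms] by simp

context
  fixes N :: "'a set" and v :: "'a set \<Rightarrow> real" and S :: "'a set"
  assumes fin: "finite N" and val: "valuation N v" and mono: "monotone_val N v"
    and sub: "submodular N v" and SN: "S \<subseteq> N"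
begin

lemma marginal_prices_surplus_subset:
  assumes "T \<subseteq> S"
  shows "v T - sum (marginal_prices N v S) T \<le> v S - sum (marginal_prices N v S) S"
proof -
  have finS: "finite S" using fin SN by (rule finite_subset[rotated])
  have "sum (marginal_prices N v S) S
      = sum (marginal_prices N v S) T + sum (marginal_prices N v S) (S - T)"
    using finS assms by (metis add.commute sum.subset_diff)
  moreover have "sum (marginal_prices N v S) (S - T) = (\<Sum>i\<in>S - T. v S - v (S - {i}))"
    unfolding marginal_prices_def by (rule sum.cong) auto
  ultimately show ?thesis using submodular_marginals_le[OF sub finS SN assms] by simp
qed

lemma marginal_prices_surplus_nonneg: "v S - sum (marginal_prices N v S) S \<ge> 0"
  using marginal_prices_surplus_subset[of "{}"] val unfolding valuation_def by simp

lemma marginal_prices_surplus_outside: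
  assumes "T \<subseteq> N" "\<not> T \<subseteq> S"
  shows "v T - sum (marginal_prices N v S) T < 0"
proof -
  obtain j where j: "j \<in> T" "j \<notin> S" using assms(2) by blast
  have "marginal_prices N v S j \<le> sum (marginal_prices N v S) T"
    using j marginal_prices_nonneg[OF val mono SN] finite_subset[OF assms(1) fin] by (intro member_le_sum) auto
  moreover have "marginal_prices N v S j = v N + 1" using j unfolding marginal_prices_def by simp
  moreover have "v T \<le> v N" using mono assms(1) unfolding monotone_val_def by blast
  ultimately show ?thesis by linarith
qed

lemma in_demand_marginal_prices: "S \<in> demand N v (marginal_prices N v S)"
proof -
  have "v T - sum (marginal_prices N v S) T \<le> v S - sum (marginal_prices N v S) S"
    if "T \<subseteq> N" for T
    using marginal_prices_surplus_subset[of T] marginal_prices_surplus_outside[OF that]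
      marginal_prices_surplus_nonneg by (cases "T \<subseteq> S") auto
  then show ?thesis unfolding demand_def using SN by blast
qed

lemma demand_marginal_prices_subset:
  assumes "T \<in> demand N v (marginal_prices N v S)"
  shows "T \<subseteq> S"
proof (rule ccontr)
  assume "\<not> T \<subseteq> S"
  moreover have TN: "T \<subseteq> N"
    and "v S - sum (marginal_prices N v S) S \<le> v T - sum (marginal_prices N v S) T"
    using assms SN unfolding demand_def by auto
  ultimately show False
    using marginal_prices_surplus_outside[OF TN] marginal_prices_surplus_nonneg by linarith
qed

lemma maximal_decision_map_marginal_prices:
  assumes "maximal_decision_map N v X"
  shows "X (marginal_prices N v S) = S"
proof -
  have "X (marginal_prices N v S) \<in> demand N v (marginal_prices N v S)"
    and "\<not> X (marginal_prices N v S) \<subset> S"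
    using assms price_vec_marginal_prices[OF val mono SN] in_demand_marginal_prices
    unfolding maximal_decision_map_def decision_map_def by blast+
  then show ?thesis using demand_marginal_prices_subset by blast
qed

lemma revenue_marginal_prices:
  assumes "maximal_decision_map N v X"
  shows "revenue N X (marginal_prices N v S) = (\<Sum>i\<in>S. marginal v {i} (S - {i}))"
proof -
  have "revenue N X (marginal_prices N v S) = sum (marginal_prices N v S) S"
    using revenue_eq_sum[OF fin] maximal_decision_map_marginal_prices[OF assms] SN by simp
  also have "\<dots> = (\<Sum>i\<in>S. marginal v {i} (S - {i}))"
    unfolding marginal_prices_def by (rule sum.cong) (auto simp: marginal_singleton)
  finally show ?thesis .
qed

end

theorem mainTheorem14:
  fixes N :: "'a set" and v :: "'a set \<Rightarrow> real" and X :: "('a \<Rightarrow> real) \<Rightarrow> 'a set"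
  assumes "finite N"
    and "valuation N v"
    and "monotone_val N v"
    and "submodular N v"
    and "maximal_decision_map N v X"
  shows "(\<exists>p. price_vec N p \<and>
            revenue N X p = (MAX S\<in>Pow N. \<Sum>i\<in>S. marginal v {i} (S - {i})))
       \<and> (\<forall>p. price_vec N p \<longrightarrow>
            revenue N X p \<le> (MAX S\<in>Pow N. \<Sum>i\<in>S. marginal v {i} (S - {i})))"
proof
  let ?f = "\<lambda>S. \<Sum>i\<in>S. marginal v {i} (S - {i})"
  have "(MAX S\<in>Pow N. ?f S) \<in> ?f ` Pow N" using assms(1) by (intro Max_in) auto
  then obtain S where SN: "S \<subseteq> N" and SM: "?f S = (MAX S\<in>Pow N. ?f S)" by auto
  show "\<exists>p. price_vec N p \<and> revenue N X p = (MAX S\<in>Pow N. ?f S)"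
    using price_vec_marginal_prices[OF assms(2,3) SN]
      revenue_marginal_prices[OF assms(1-4) SN assms(5)] SM by auto
  show "\<forall>p. price_vec N p \<longrightarrow> revenue N X p \<le> (MAX S\<in>Pow N. ?f S)"
    using revenue_le_Max_marginals[OF assms(1)] assms(5)
    unfolding maximal_decision_map_def by blast
qed

end
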